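(* Let $s(t)\in\mathbb{R}^n$ and $\tilde a(t)\in\mathbb{R}^h$ evolve according to $$\begin{bmatrix} M & 0\\ 0 & P^{-1}\end{bmatrix}\begin{bmatrix}\dot s\\ \dot{\tilde a}\end{bmatrix} + \begin{bmatrix} C+K & \phi\\ -\phi^\top & \phi^\top R^{-1}\phi + \lambda P^{-1}\end{bmatrix}\begin{bmatrix} s\\ \tilde a\end{bmatrix} = \begin{bmatrix} d\\ \phi^\top R^{-1}\bar\epsilon - P^{-1}\lambda a - P^{-1}\dot a\end{bmatrix},$$ $$\frac{d}{dt}\big(P^{-1}\big) = P^{-1}\big(2\lambda P - Q + P\phi^\top R^{-1}\phi P\big)P^{-1},$$ with $P^{-1}$ uniformly positive definite and uniformly bounded, and define $\mathcal{M} = \begin{bmatrix} M & 0\\ 0 & P^{-1}\end{bmatrix}$. If $\phi\equiv 0$, then $$\lim_{t\to\infty}\left\|\begin{bmatrix} s\\ \tilde a\end{bmatrix}\right\| \le \frac{\sup\|d\| + \lambda_{\max}(P^{-1})\sup\|\lambda a + \dot a\|}{\min\big(\lambda, \lambda_{\min}(K)/\lambda_{\max}(M)\big)\,\lambda_{\min}(\mathcal{M})}.$$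
   Context: $M=M(q(t))$ is a uniformly positive definite, uniformly bounded symmetric inertia matrix and $C$ the Coriolis matrix with $\dot M - 2C$ skew-symmetric; $K$ is a uniformly positive definite, bounded gain matrix; $Q$ and $R$ are positive definite gain matrices (with $Q$ uniformly positive definite); $\lambda>0$ is a damping gain; $a(t)$ is a differentiable parameter vector; $d(t)$ and $\bar\epsilon(t)$ are bounded disturbance signals. $\lambda_{\min}(\cdot)$ and $\lambda_{\max}(\cdot)$ denote the minimum and maximum eigenvalue of the argument over all time. *)

theory Defs
  imports "HOL-Analysis.Analysis"
begin

text \<open>Real eigenvalues of a square matrix, and the minimum / maximum eigenvalue
  (meaningful for symmetric matrices, for which all eigenvalues are real).\<close>
definition eigvals :: "real^'n^'n \<Rightarrow> real set" where
  "eigvals A = {\<mu>. \<exists>v. v \<noteq> 0 \<and> A *v v = \<mu> *\<^sub>R v}"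

definition lam_min :: "real^'n^'n \<Rightarrow> real" where
  "lam_min A = Min (eigvals A)"

definition lam_max :: "real^'n^'n \<Rightarrow> real" where
  "lam_max A = Max (eigvals A)"

definition lam_min_T :: "real set \<Rightarrow> (real \<Rightarrow> real^'n^'n) \<Rightarrow> real" where
  "lam_min_T T A = (INF t\<in>T. lam_min (A t))"

definition lam_max_T :: "real set \<Rightarrow> (real \<Rightarrow> real^'n^'n) \<Rightarrow> real" where
  "lam_max_T T A = (SUP t\<in>T. lam_max (A t))"

definition symmetric_mat :: "real^'n^'n \<Rightarrow> bool" where
  "symmetric_mat A \<longleftrightarrow> transpose A = A"

definition pos_def :: "real^'n^'n \<Rightarrow> bool" where
  "pos_def A \<longleftrightarrow> symmetric_mat A \<and> (\<forall>x. x \<noteq> 0 \<longrightarrow> x \<bullet> (A *v x) > 0)"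

definition unif_pos_def :: "real set \<Rightarrow> (real \<Rightarrow> real^'n^'n) \<Rightarrow> bool" where
  "unif_pos_def T A \<longleftrightarrow> (\<exists>c>0. \<forall>t\<in>T. symmetric_mat (A t) \<and>
      (\<forall>x. x \<bullet> (A t *v x) \<ge> c * (norm x)\<^sup>2))"

definition stack :: "real^'n \<Rightarrow> real^'h \<Rightarrow> real^('n + 'h)" where
  "stack s a = (\<chi> i. case i of Inl j \<Rightarrow> s $ j | Inr j \<Rightarrow> a $ j)"

definition blockdiag :: "real^'n^'n \<Rightarrow> real^'h^'h \<Rightarrow> real^('n + 'h)^('n + 'h)" where
  "blockdiag A B = (\<chi> i k. case (i, k) of (Inl p, Inl q) \<Rightarrow> A $ p $ q
                                      | (Inr p, Inr q) \<Rightarrow> B $ p $ q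
                                      | _ \<Rightarrow> 0)"

end

(* With \<phi> = 0 the closed loop decouples: M s' + (C + K) s = d and, P^-1 being positive definite,
   the adaptation law reduces to atil' = - \<lambda> atil - (\<lambda> a + a').  Both parts admit a quadratic
   Lyapunov function V (s' M s, whose derivative loses the Coriolis term because M' - 2 C is skew;
   resp. |atil|^2) with V' \<le> 2 D |x| - 2 k |x|^2.  Hence V decreases at a uniform rate as long as
   |x| exceeds D / k by a fixed margin, so it eventually stays below the matching level.  Comparing
   V with |x|^2 gives limsup |s| \<le> (m_max / \<mu>)^(1/2) sup |d| / k_min and
   limsup |atil| \<le> sup |\<lambda> a + a'| / \<lambda>, where \<mu> is the least eigenvalue of diag(M, P^-1); both
   are dominated by the claimed bound because \<mu> \<le> m_max and \<mu> \<le> p_max. *)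

theory Submission
  imports Defs
begin

section \<open>Quadratic forms and extreme eigenvalues\<close>

lemma symmetric_mat_inner_swap:
  fixes A :: "real^'n^'n"
  assumes "symmetric_mat A"
  shows "x \<bullet> (A *v y) = (A *v x) \<bullet> y"
  by (metis assms dot_lmul_matrix symmetric_mat_def transpose_matrix_vector)

lemma uminus_matrix_vector_mult: "(- A) *v x = - (A *v x)"
  for A :: "real^'n^'m"
  by (simp add: vec_eq_iff matrix_vector_mult_def sum_negf)

lemma skew_quadratic_form_eq_0:
  fixes S :: "real^'n^'n"
  assumes "transpose S = - S"
  shows "x \<bullet> (S *v x) = 0"
proof -
  have "x \<bullet> (S *v x) = (transpose S *v x) \<bullet> x"
    by (simp add: dot_lmul_matrix)
  also have "transpose S *v x = - (S *v x)"
    by (simp add: assms uminus_matrix_vector_mult)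
  finally have "x \<bullet> (S *v x) = - (x \<bullet> (S *v x))" by (simp add: inner_commute)
  then show ?thesis by simp
qed

lemma linear_coeff_eq_0_if_quadratic_nonneg:
  fixes b c :: real
  assumes nonneg: "\<And>e. 0 \<le> b * e + c * e\<^sup>2"
  shows "b = 0"
proof -
  define k where "k = \<bar>c\<bar> + 1"
  have "k > 0" by (simp add: k_def add_pos_nonneg)
  have "0 \<le> k\<^sup>2 * (b * (- b / k) + c * (- b / k)\<^sup>2)"
    using nonneg[of "- b / k"] by (intro mult_nonneg_nonneg) auto
  also have "\<dots> = b\<^sup>2 * (c - k)"
    using \<open>k > 0\<close> by (simp add: power2_eq_square field_simps)
  finally have "0 \<le> b\<^sup>2 * (c - k)" .
  moreover have "c - k < 0" by (simp add: k_def)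
  ultimately show ?thesis by (auto simp: zero_le_mult_iff)
qed

lemma eigvec_if_quadratic_form_min:
  fixes A :: "real^'n^'n"
  assumes sym: "symmetric_mat A"
    and lower: "\<And>x. r * (norm x)\<^sup>2 \<le> x \<bullet> (A *v x)"
    and attained: "u \<bullet> (A *v u) = r * (norm u)\<^sup>2"
  shows "A *v u = r *\<^sub>R u"
proof -
  define w where "w = A *v u - r *\<^sub>R u"
  define c where "c = w \<bullet> (A *v w) - r * (norm w)\<^sup>2"
  have swap: "u \<bullet> (A *v w) = w \<bullet> (A *v u)"
    using symmetric_mat_inner_swap[OF sym] by (simp add: inner_commute)
  have "w \<bullet> (A *v u) - r * (w \<bullet> u) = w \<bullet> (A *v u - r *\<^sub>R u)"
    by (simp add: inner_diff_right)
  then have norm_w: "w \<bullet> (A *v u) - r * (w \<bullet> u) = (norm w)\<^sup>2"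
    by (simp add: w_def[symmetric] power2_norm_eq_inner)
  \<comment> \<open>u minimises x \<bullet> A x - r |x|^2, whose first variation at u in direction w is 2 |w|^2\<close>
  have "(u + e *\<^sub>R w) \<bullet> (A *v (u + e *\<^sub>R w)) - r * (norm (u + e *\<^sub>R w))\<^sup>2
      = (u \<bullet> (A *v u) - r * (norm u)\<^sup>2) + 2 * e * (w \<bullet> (A *v u) - r * (w \<bullet> u)) + c * e\<^sup>2" for e
    using swap unfolding c_def power2_norm_eq_inner
    by (simp add: inner_commute power2_eq_square algebra_simps)
  then have "0 \<le> 2 * (norm w)\<^sup>2 * e + c * e\<^sup>2" for e
    using lower[of "u + e *\<^sub>R w"] attained norm_w by (simp add: algebra_simps)
  then have "2 * (norm w)\<^sup>2 = 0" by (rule linear_coeff_eq_0_if_quadratic_nonneg)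
  then show ?thesis by (simp add: w_def)
qed

lemma symmetric_mat_rayleigh_min:
  fixes A :: "real^'n^'n"
  assumes sym: "symmetric_mat A"
  obtains r where "r \<in> eigvals A" and "\<And>x. r * (norm x)\<^sup>2 \<le> x \<bullet> (A *v x)"
proof -
  let ?S = "sphere (0::real^'n) 1"
  obtain i :: 'n where True by simp
  have "axis i 1 \<in> ?S" by simp
  then have "?S \<noteq> {}" by blast
  moreover have "continuous_on ?S (\<lambda>x. x \<bullet> (A *v x))"
    by (intro continuous_intros linear_continuous_on matrix_vector_mul_bounded_linear)
  ultimately obtain u where u: "u \<in> ?S" and umin: "\<And>y. y \<in> ?S \<Longrightarrow> u \<bullet> (A *v u) \<le> y \<bullet> (A *v y)"
    using continuous_attains_inf[OF compact_sphere] by blast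
  define r where "r = u \<bullet> (A *v u)"
  have lower: "r * (norm x)\<^sup>2 \<le> x \<bullet> (A *v x)" for x
  proof (cases "x = 0")
    case False
    then have "r \<le> ((1 / norm x) *\<^sub>R x) \<bullet> (A *v ((1 / norm x) *\<^sub>R x))"
      unfolding r_def by (intro umin) simp
    also have "\<dots> = (x \<bullet> (A *v x)) / (norm x)\<^sup>2"
      by (simp add: matrix_vector_mult_scaleR power2_eq_square)
    finally show ?thesis using False by (simp add: pos_le_divide_eq)
  qed simp
  have "A *v u = r *\<^sub>R u"
    using u by (intro eigvec_if_quadratic_form_min[OF sym lower]) (simp add: r_def)
  then have "r \<in> eigvals A"
    using u by (auto simp: eigvals_def intro!: exI[of _ u])
  with lower show ?thesis using that by blast
qed

lemma symmetric_mat_eigvecs_orthogonal: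
  fixes A :: "real^'n^'n"
  assumes sym: "symmetric_mat A" and "A *v v = \<mu> *\<^sub>R v" "A *v w = \<nu> *\<^sub>R w" "\<mu> \<noteq> \<nu>"
  shows "orthogonal v w"
proof -
  have "\<mu> * (v \<bullet> w) = (A *v v) \<bullet> w" using assms(2) by simp
  also have "\<dots> = v \<bullet> (A *v w)" using symmetric_mat_inner_swap[OF sym] by simp
  also have "\<dots> = \<nu> * (v \<bullet> w)" using assms(3) by simp
  finally have "(\<mu> - \<nu>) * (v \<bullet> w) = 0" by (simp add: algebra_simps)
  then show ?thesis using assms(4) by (simp add: orthogonal_def)
qed

lemma symmetric_mat_finite_eigvals:
  fixes A :: "real^'n^'n"
  assumes sym: "symmetric_mat A"
  shows "finite (eigvals A)"
proof -
  have "\<forall>\<mu>\<in>eigvals A. \<exists>v. v \<noteq> 0 \<and> A *v v = \<mu> *\<^sub>R v"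
    by (simp add: eigvals_def)
  from bchoice[OF this] obtain f
    where f: "\<forall>\<mu>\<in>eigvals A. f \<mu> \<noteq> 0 \<and> A *v f \<mu> = \<mu> *\<^sub>R f \<mu>" ..
  have inj: "inj_on f (eigvals A)"
  proof (rule inj_onI)
    fix \<mu> \<nu> assume \<mu>: "\<mu> \<in> eigvals A" and \<nu>: "\<nu> \<in> eigvals A" and "f \<mu> = f \<nu>"
    have "\<mu> *\<^sub>R f \<mu> = A *v f \<mu>" using f \<mu> by simp
    also have "\<dots> = \<nu> *\<^sub>R f \<mu>" using f \<nu> \<open>f \<mu> = f \<nu>\<close> by simp
    finally show "\<mu> = \<nu>" using f \<mu> by simp
  qed
  have "pairwise orthogonal (f ` eigvals A)"
  proof (clarsimp simp: pairwise_def)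
    fix \<mu> \<nu> assume "\<mu> \<in> eigvals A" "\<nu> \<in> eigvals A" "f \<mu> \<noteq> f \<nu>"
    then show "orthogonal (f \<mu>) (f \<nu>)"
      using f by (intro symmetric_mat_eigvecs_orthogonal[OF sym]) auto
  qed
  moreover have "0 \<notin> f ` eigvals A" using f by auto
  ultimately have "independent (f ` eigvals A)"
    by (rule pairwise_orthogonal_independent)
  then have "finite (f ` eigvals A)" by (rule independent_imp_finite)
  then show ?thesis using inj finite_imageD by blast
qed

lemma symmetric_mat_lam_min:
  fixes A :: "real^'n^'n"
  assumes sym: "symmetric_mat A"
  shows "lam_min A \<in> eigvals A" and "lam_min A * (norm x)\<^sup>2 \<le> x \<bullet> (A *v x)"
proof -
  obtain r where r: "r \<in> eigvals A" and lower: "\<And>x. r * (norm x)\<^sup>2 \<le> x \<bullet> (A *v x)"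
    using symmetric_mat_rayleigh_min[OF sym] by blast
  show "lam_min A \<in> eigvals A"
    unfolding lam_min_def using symmetric_mat_finite_eigvals[OF sym] r by (intro Min_in) auto
  have "lam_min A \<le> r"
    unfolding lam_min_def using symmetric_mat_finite_eigvals[OF sym] r by simp
  then show "lam_min A * (norm x)\<^sup>2 \<le> x \<bullet> (A *v x)"
    using lower[of x] by (meson mult_right_mono order_trans zero_le_power2)
qed

lemma uminus_in_eigvals_iff: "\<mu> \<in> eigvals (- A) \<longleftrightarrow> - \<mu> \<in> eigvals A"
proof -
  have "(- A) *v v = \<mu> *\<^sub>R v \<longleftrightarrow> A *v v = (- \<mu>) *\<^sub>R v" for v
    unfolding uminus_matrix_vector_mult by (metis minus_minus scaleR_minus_left)
  then show ?thesis
    unfolding eigvals_def by simp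
qed

lemma symmetric_mat_lam_max:
  fixes A :: "real^'n^'n"
  assumes sym: "symmetric_mat A"
  shows "lam_max A \<in> eigvals A" and "x \<bullet> (A *v x) \<le> lam_max A * (norm x)\<^sup>2"
proof -
  have sym': "symmetric_mat (- A)"
    using sym by (simp add: symmetric_mat_def transpose_def vec_eq_iff)
  have fin: "finite (eigvals A)" by (rule symmetric_mat_finite_eigvals[OF sym])
  have "- lam_min (- A) \<in> eigvals A"
    using symmetric_mat_lam_min(1)[OF sym'] by (simp add: uminus_in_eigvals_iff)
  then have le: "- lam_min (- A) \<le> lam_max A"
    unfolding lam_max_def using fin by simp
  show "lam_max A \<in> eigvals A"
    unfolding lam_max_def using fin \<open>- lam_min (- A) \<in> eigvals A\<close> by (intro Max_in) auto
  have "x \<bullet> (A *v x) \<le> - lam_min (- A) * (norm x)\<^sup>2"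
    using symmetric_mat_lam_min(2)[OF sym', of x] by (simp add: uminus_matrix_vector_mult)
  also have "\<dots> \<le> lam_max A * (norm x)\<^sup>2"
    using le by (rule mult_right_mono) simp
  finally show "x \<bullet> (A *v x) \<le> lam_max A * (norm x)\<^sup>2" .
qed

lemma eigval_ge_if_quadratic_form_ge:
  fixes A :: "real^'n^'n"
  assumes "\<And>x. c * (norm x)\<^sup>2 \<le> x \<bullet> (A *v x)" and "\<mu> \<in> eigvals A"
  shows "c \<le> \<mu>"
proof -
  obtain v where "v \<noteq> 0" "A *v v = \<mu> *\<^sub>R v" using assms(2) by (auto simp: eigvals_def)
  then have "c * (norm v)\<^sup>2 \<le> \<mu> * (norm v)\<^sup>2"
    using assms(1)[of v] by (simp add: power2_norm_eq_inner)
  then show ?thesis using \<open>v \<noteq> 0\<close> by simp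
qed

lemma norm_matrix_vector_mult_le:
  fixes A :: "real^'n^'m"
  shows "norm (A *v x) \<le> real CARD('m) * real CARD('n) * norm A * norm x"
proof -
  have "onorm ((*v) A) \<le> real CARD('m) * real CARD('n) * norm A"
    by (rule onorm_le_matrix_component)
      (rule order_trans[OF component_le_norm_cart Finite_Cartesian_Product.norm_nth_le])
  then show ?thesis
    using onorm[OF matrix_vector_mul_bounded_linear, of A x] norm_ge_zero[of x]
    by (meson mult_right_mono order_trans)
qed

lemma abs_eigval_le_norm:
  fixes A :: "real^'n^'n"
  assumes "\<mu> \<in> eigvals A"
  shows "\<bar>\<mu>\<bar> \<le> real CARD('n) * real CARD('n) * norm A"
proof -
  obtain v where "v \<noteq> 0" "A *v v = \<mu> *\<^sub>R v" using assms by (auto simp: eigvals_def)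
  then have "\<bar>\<mu>\<bar> * norm v \<le> real CARD('n) * real CARD('n) * norm A * norm v"
    using norm_matrix_vector_mult_le[of A v] by simp
  then show ?thesis using \<open>v \<noteq> 0\<close> by simp
qed

lemma le_if_quadratic_form_between:
  fixes A :: "real^'n^'n"
  assumes "\<And>x. c1 * (norm x)\<^sup>2 \<le> x \<bullet> (A *v x)" and "\<And>x. x \<bullet> (A *v x) \<le> c2 * (norm x)\<^sup>2"
  shows "c1 \<le> c2"
proof -
  obtain i :: 'n where True by simp
  show ?thesis using assms[of "axis i 1"] by simp
qed

lemma bounded_bilinear_matrix_vector_mult:
  "bounded_bilinear (\<lambda>(A::real^'n^'m) x. A *v x)"
proof
  fix A A' :: "real^'n^'m" and x x' :: "real^'n" and r :: real
  show "(A + A') *v x = A *v x + A' *v x" by (simp add: matrix_vector_mult_add_rdistrib)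
  show "A *v (x + x') = A *v x + A *v x'" by (simp add: matrix_vector_right_distrib)
  show "(r *\<^sub>R A) *v x = r *\<^sub>R (A *v x)" by (simp add: scaleR_matrix_vector_assoc)
  show "A *v (r *\<^sub>R x) = r *\<^sub>R (A *v x)" by (simp add: matrix_vector_mult_scaleR)
next
  have "norm (A *v x) \<le> norm A * norm x * (real CARD('m) * real CARD('n))" for A :: "real^'n^'m" and x
    using norm_matrix_vector_mult_le[of A x] by (simp add: ac_simps)
  then show "\<exists>K. \<forall>(A::real^'n^'m) x. norm (A *v x) \<le> norm A * norm x * K" by blast
qed

lemma unif_pos_def_symmetric: "unif_pos_def T A \<Longrightarrow> t \<in> T \<Longrightarrow> symmetric_mat (A t)"
  by (auto simp: unif_pos_def_def)

lemma unif_pos_def_lam_min_T: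
  assumes pd: "unif_pos_def T A" and "T \<noteq> {}"
  shows "lam_min_T T A > 0"
    and "t \<in> T \<Longrightarrow> lam_min_T T A * (norm x)\<^sup>2 \<le> x \<bullet> (A t *v x)"
proof -
  obtain c where "c > 0" and c: "\<And>t. t \<in> T \<Longrightarrow> symmetric_mat (A t) \<and> (\<forall>x. c * (norm x)\<^sup>2 \<le> x \<bullet> (A t *v x))"
    using pd unfolding unif_pos_def_def by blast
  have c_le: "c \<le> lam_min (A t)" if "t \<in> T" for t
    using c[OF that] eigval_ge_if_quadratic_form_ge[of c "A t"] symmetric_mat_lam_min(1)[of "A t"]
    by blast
  have "c \<le> lam_min_T T A"
    unfolding lam_min_T_def using \<open>T \<noteq> {}\<close> c_le by (rule cINF_greatest)
  then show "lam_min_T T A > 0" using \<open>c > 0\<close> by linarith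
  assume "t \<in> T"
  then have "lam_min_T T A \<le> lam_min (A t)"
    unfolding lam_min_T_def using c_le by (intro cINF_lower bdd_belowI2) auto
  then show "lam_min_T T A * (norm x)\<^sup>2 \<le> x \<bullet> (A t *v x)"
    using symmetric_mat_lam_min(2)[of "A t" x] c[OF \<open>t \<in> T\<close>]
    by (meson mult_right_mono order_trans zero_le_power2)
qed

lemma bounded_lam_max_T:
  fixes A :: "real \<Rightarrow> real^'n^'n"
  assumes sym: "\<And>t. t \<in> T \<Longrightarrow> symmetric_mat (A t)" and "bounded (A ` T)" and "t \<in> T"
  shows "x \<bullet> (A t *v x) \<le> lam_max_T T A * (norm x)\<^sup>2"
proof -
  obtain b where b: "\<And>t. t \<in> T \<Longrightarrow> norm (A t) \<le> b"
    using \<open>bounded (A ` T)\<close> unfolding bounded_iff by blast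
  have "lam_max (A t) \<le> real CARD('n) * real CARD('n) * b" if "t \<in> T" for t
  proof -
    have "lam_max (A t) \<le> real CARD('n) * real CARD('n) * norm (A t)"
      using abs_eigval_le_norm[OF symmetric_mat_lam_max(1)[OF sym[OF that]]] by linarith
    also have "\<dots> \<le> real CARD('n) * real CARD('n) * b"
      using b[OF that] by (rule mult_left_mono) simp
    finally show ?thesis .
  qed
  then have "lam_max (A t) \<le> lam_max_T T A"
    unfolding lam_max_T_def using \<open>t \<in> T\<close> by (intro cSUP_upper bdd_aboveI2) auto
  then show ?thesis
    using symmetric_mat_lam_max(2)[OF sym[OF \<open>t \<in> T\<close>], of x]
    by (meson mult_right_mono order_trans zero_le_power2)
qed

section \<open>Stacked vectors and block-diagonal matrices\<close>

lemma sum_UNIV_sum_type: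
  "(\<Sum>i\<in>UNIV. f i) = (\<Sum>j\<in>UNIV. f (Inl j)) + (\<Sum>k\<in>UNIV. f (Inr k))"
  for f :: "'a::finite + 'b::finite \<Rightarrow> 'c::comm_monoid_add"
  by (subst UNIV_Plus_UNIV[symmetric], subst sum.Plus) (auto simp: o_def)

lemma inner_stack: "stack s a \<bullet> stack s' a' = s \<bullet> s' + a \<bullet> a'"
  by (simp add: inner_vec_def sum_UNIV_sum_type stack_def)

lemma norm_stack: "norm (stack s a) = sqrt ((norm s)\<^sup>2 + (norm a)\<^sup>2)"
  by (simp add: norm_eq_sqrt_inner inner_stack power2_norm_eq_inner)

lemma norm_stack_le: "norm (stack s a) \<le> norm s + norm a"
  unfolding norm_stack by (rule sqrt_sum_squares_le_sum) auto

lemma blockdiag_mult_stack: "blockdiag A B *v stack s a = stack (A *v s) (B *v a)"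
  by (simp add: vec_eq_iff blockdiag_def stack_def matrix_vector_mult_def sum_UNIV_sum_type
      split: sum.split)

lemma exists_stack_eq: "\<exists>s a. x = stack s a"
  by (rule exI[of _ "\<chi> j. x $ Inl j"], rule exI[of _ "\<chi> k. x $ Inr k"])
    (simp add: vec_eq_iff stack_def split: sum.split)

lemma unif_pos_def_blockdiag:
  assumes A: "unif_pos_def T A" and B: "unif_pos_def T B"
  shows "unif_pos_def T (\<lambda>t. blockdiag (A t) (B t))"
proof -
  obtain cA where "cA > 0" and cA: "\<And>t. t \<in> T \<Longrightarrow> symmetric_mat (A t) \<and> (\<forall>x. cA * (norm x)\<^sup>2 \<le> x \<bullet> (A t *v x))"
    using A unfolding unif_pos_def_def by blast
  obtain cB where "cB > 0" and cB: "\<And>t. t \<in> T \<Longrightarrow> symmetric_mat (B t) \<and> (\<forall>x. cB * (norm x)\<^sup>2 \<le> x \<bullet> (B t *v x))"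
    using B unfolding unif_pos_def_def by blast
  have "symmetric_mat (blockdiag (A t) (B t))" if "t \<in> T" for t
    using cA[OF that] cB[OF that]
    by (simp add: symmetric_mat_def vec_eq_iff blockdiag_def transpose_def split: sum.split)
  moreover have "min cA cB * (norm x)\<^sup>2 \<le> x \<bullet> (blockdiag (A t) (B t) *v x)" if "t \<in> T" for t x
  proof -
    obtain s a where x: "x = stack s a" using exists_stack_eq by blast
    have "min cA cB * (norm x)\<^sup>2 = min cA cB * (norm s)\<^sup>2 + min cA cB * (norm a)\<^sup>2"
      by (simp add: x norm_stack algebra_simps)
    also have "\<dots> \<le> cA * (norm s)\<^sup>2 + cB * (norm a)\<^sup>2"
      by (intro add_mono mult_right_mono) auto
    also have "\<dots> \<le> s \<bullet> (A t *v s) + a \<bullet> (B t *v a)"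
      using cA[OF that] cB[OF that] by (intro add_mono) auto
    also have "\<dots> = x \<bullet> (blockdiag (A t) (B t) *v x)"
      by (simp add: x blockdiag_mult_stack inner_stack)
    finally show ?thesis .
  qed
  ultimately show ?thesis
    unfolding unif_pos_def_def using \<open>cA > 0\<close> \<open>cB > 0\<close> by (intro exI[of _ "min cA cB"]) auto
qed

lemma lam_min_T_blockdiag:
  assumes A: "unif_pos_def T A" and B: "unif_pos_def T B" and "T \<noteq> {}"
  defines "\<mu> \<equiv> lam_min_T T (\<lambda>t. blockdiag (A t) (B t))"
  shows "0 < \<mu>"
    and "t \<in> T \<Longrightarrow> \<mu> * (norm x)\<^sup>2 \<le> x \<bullet> (A t *v x)"
    and "t \<in> T \<Longrightarrow> \<mu> * (norm y)\<^sup>2 \<le> y \<bullet> (B t *v y)"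
proof -
  note AB = unif_pos_def_blockdiag[OF A B]
  show "0 < \<mu>" unfolding \<mu>_def by (rule unif_pos_def_lam_min_T(1)[OF AB \<open>T \<noteq> {}\<close>])
  assume "t \<in> T"
  have "\<mu> * (norm (stack x y))\<^sup>2 \<le> stack x y \<bullet> (blockdiag (A t) (B t) *v stack x y)" for x y
    unfolding \<mu>_def by (rule unif_pos_def_lam_min_T(2)[OF AB \<open>T \<noteq> {}\<close> \<open>t \<in> T\<close>])
  from this[of x 0] this[of 0 y] show "\<mu> * (norm x)\<^sup>2 \<le> x \<bullet> (A t *v x)" "\<mu> * (norm y)\<^sup>2 \<le> y \<bullet> (B t *v y)"
    by (simp_all add: norm_stack blockdiag_mult_stack inner_stack)
qed

lemma le_lam_max_T_if_quadratic_form_ge: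
  fixes A :: "real \<Rightarrow> real^'n^'n"
  assumes lower: "\<And>t x. t \<in> T \<Longrightarrow> c * (norm x)\<^sup>2 \<le> x \<bullet> (A t *v x)"
    and sym: "\<And>t. t \<in> T \<Longrightarrow> symmetric_mat (A t)" and "bounded (A ` T)" and "t \<in> T"
  shows "c \<le> lam_max_T T A"
  by (rule le_if_quadratic_form_between[OF lower[OF \<open>t \<in> T\<close>]
        bounded_lam_max_T[OF sym \<open>bounded (A ` T)\<close> \<open>t \<in> T\<close>]])

section \<open>Ultimate bounds from Lyapunov functions\<close>

lemma has_real_derivative_on_nonneg_reals:
  fixes V V' :: "real \<Rightarrow> real"
  assumes der: "\<And>t. t \<ge> 0 \<Longrightarrow> (V has_real_derivative V' t) (at t within {0..})"
  shows "continuous_on {0..} V" and "t > 0 \<Longrightarrow> (V has_real_derivative V' t) (at t)"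
proof -
  show "continuous_on {0..} V"
    unfolding continuous_on_eq_continuous_within using der DERIV_continuous by blast
  assume "t > 0"
  have "(V has_real_derivative V' t) (at t within {0<..})"
    by (rule DERIV_subset[OF der]) (use \<open>t > 0\<close> in auto)
  then show "(V has_real_derivative V' t) (at t)"
    using \<open>t > 0\<close> at_within_open[of t "{0<..}"] by simp
qed

lemma decrease_if_deriv_le:
  fixes V V' :: "real \<Rightarrow> real"
  assumes der: "\<And>t. t \<ge> 0 \<Longrightarrow> (V has_real_derivative V' t) (at t within {0..})"
    and "0 \<le> a" "a < b"
    and slope: "\<And>z. a < z \<Longrightarrow> z < b \<Longrightarrow> V' z \<le> - \<eta>"
  shows "V b \<le> V a - (b - a) * \<eta>"
proof -
  note V = has_real_derivative_on_nonneg_reals[OF der]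
  have "continuous_on {a..b} V"
    using V(1) by (rule continuous_on_subset) (use \<open>0 \<le> a\<close> in auto)
  moreover have "V differentiable (at z)" if "a < z" "z < b" for z
    using V(2)[of z] that \<open>0 \<le> a\<close> real_differentiable_def by force
  ultimately obtain l z where z: "a < z" "z < b" "DERIV V z :> l" "V b - V a = (b - a) * l"
    using MVT[OF \<open>a < b\<close>] by blast
  have "l = V' z"
    using DERIV_unique[OF z(3) V(2)] z \<open>0 \<le> a\<close> by simp
  then have "(b - a) * l \<le> (b - a) * (- \<eta>)"
    using slope z \<open>a < b\<close> by (intro mult_left_mono) auto
  then show ?thesis using z(4) by simp
qed

lemma stays_below_if_deriv_neg_above:
  fixes V V' :: "real \<Rightarrow> real"
  assumes der: "\<And>t. t \<ge> 0 \<Longrightarrow> (V has_real_derivative V' t) (at t within {0..})"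
    and dec: "\<And>t. t > 0 \<Longrightarrow> V t > B \<Longrightarrow> V' t < 0"
    and "0 \<le> t1" "t1 \<le> t" "V t1 \<le> B"
  shows "V t \<le> B"
proof (rule ccontr)
  assume "\<not> V t \<le> B"
  define S where "S = {t1..t} \<inter> V -` {..B}"
  have "closed S"
    unfolding S_def using has_real_derivative_on_nonneg_reals(1)[OF der] \<open>0 \<le> t1\<close>
    by (intro continuous_closed_preimage) (auto intro: continuous_on_subset)
  moreover have "t1 \<in> S" "bdd_above S"
    using assms(3-5) by (auto simp: S_def intro: bdd_aboveI[of _ t])
  ultimately have "Sup S \<in> S" using closed_contains_Sup by blast
  define t0 where "t0 = Sup S"
  have t0: "t1 \<le> t0" "t0 \<le> t" "V t0 \<le> B"
    using \<open>Sup S \<in> S\<close> by (auto simp: S_def t0_def)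
  with \<open>\<not> V t \<le> B\<close> have "t0 < t" by (cases "t0 = t") auto
  have above: "B < V z" if "t0 < z" "z \<le> t" for z
  proof (rule ccontr)
    assume "\<not> B < V z"
    then have "z \<in> S" using that t0 by (auto simp: S_def)
    then have "z \<le> t0" unfolding t0_def using \<open>bdd_above S\<close> by (rule cSup_upper)
    then show False using that by simp
  qed
  have "V t \<le> V t0 - (t - t0) * 0"
    by (rule decrease_if_deriv_le[OF der]) (use t0 \<open>0 \<le> t1\<close> \<open>t0 < t\<close> above dec in \<open>auto intro: less_imp_le\<close>)
  with t0 \<open>\<not> V t \<le> B\<close> show False by simp
qed

lemma eventually_le_if_deriv_neg_above:
  fixes V V' :: "real \<Rightarrow> real"
  assumes der: "\<And>t. t \<ge> 0 \<Longrightarrow> (V has_real_derivative V' t) (at t within {0..})"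
    and "\<eta> > 0" and dec: "\<And>t. t > 0 \<Longrightarrow> V t > B \<Longrightarrow> V' t \<le> - \<eta>"
  shows "eventually (\<lambda>t. V t \<le> B) at_top"
proof -
  have "\<exists>t1\<ge>0. V t1 \<le> B"
  proof (rule ccontr)
    assume "\<not> ?thesis"
    then have above: "\<And>t. t \<ge> 0 \<Longrightarrow> B < V t" by force
    define b where "b = 1 + (V 1 - B) / \<eta>"
    have "1 < b" using above[of 1] \<open>\<eta> > 0\<close> by (simp add: b_def)
    then have "V b \<le> V 1 - (b - 1) * \<eta>"
      using above dec by (intro decrease_if_deriv_le[OF der]) auto
    also have "\<dots> = B" using \<open>\<eta> > 0\<close> by (simp add: b_def)
    finally show False using above[of b] \<open>1 < b\<close> by simp
  qed
  then obtain t1 where t1: "t1 \<ge> 0" "V t1 \<le> B" by blast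
  have neg: "V' t < 0" if "t > 0" "V t > B" for t
    using dec[OF that] \<open>\<eta> > 0\<close> by simp
  have "V t \<le> B" if "t \<ge> t1" for t
    by (rule stays_below_if_deriv_neg_above[OF der neg t1(1) that t1(2)])
  then show ?thesis
    unfolding eventually_at_top_linorder by blast
qed

lemma lyapunov_ultimate_bound:
  fixes x :: "real \<Rightarrow> 'a::real_normed_vector" and V V' :: "real \<Rightarrow> real"
  assumes der: "\<And>t. t \<ge> 0 \<Longrightarrow> (V has_real_derivative V' t) (at t within {0..})"
    and lower: "\<And>t. t \<ge> 0 \<Longrightarrow> c1 * (norm (x t))\<^sup>2 \<le> V t"
    and upper: "\<And>t. t \<ge> 0 \<Longrightarrow> V t \<le> c2 * (norm (x t))\<^sup>2"
    and dissipation: "\<And>t. t > 0 \<Longrightarrow> V' t \<le> 2 * D * norm (x t) - 2 * k * (norm (x t))\<^sup>2"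
    and "0 < c1" "0 < c2" "0 < k" "0 \<le> D" "0 < e"
  shows "eventually (\<lambda>t. norm (x t) \<le> sqrt (c2 / c1) * D / k + e) at_top"
proof -
  define \<epsilon> where "\<epsilon> = e / sqrt (c2 / c1)"
  have "0 < \<epsilon>" using \<open>0 < c1\<close> \<open>0 < c2\<close> \<open>0 < e\<close> by (simp add: \<epsilon>_def)
  define B where "B = c2 * (D / k + \<epsilon>)\<^sup>2"
  have "V' t \<le> - (2 * k * \<epsilon>\<^sup>2)" if "t > 0" "V t > B" for t
  proof -
    define r where "r = norm (x t)"
    have "c2 * (D / k + \<epsilon>)\<^sup>2 < c2 * r\<^sup>2"
      using that upper[of t] by (simp add: B_def r_def)
    then have "D / k + \<epsilon> < r"
      using \<open>0 < c2\<close> by (auto simp: r_def intro: power_less_imp_less_base)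
    moreover have "0 \<le> D / k" using \<open>0 < k\<close> \<open>0 \<le> D\<close> by simp
    ultimately have "\<epsilon> \<le> r" by linarith
    have "k * \<epsilon> \<le> k * r - D"
      using \<open>D / k + \<epsilon> < r\<close> \<open>0 < k\<close> by (simp add: field_simps)
    with \<open>\<epsilon> \<le> r\<close> have "\<epsilon> * (k * \<epsilon>) \<le> r * (k * r - D)"
      using \<open>0 < \<epsilon>\<close> \<open>0 < k\<close> by (simp add: mult_mono)
    then have "2 * D * r - 2 * k * r\<^sup>2 \<le> - (2 * k * \<epsilon>\<^sup>2)"
      by (simp add: power2_eq_square algebra_simps)
    then show ?thesis using dissipation[OF \<open>t > 0\<close>] by (simp add: r_def)
  qed
  then have "eventually (\<lambda>t. V t \<le> B) at_top"
    using \<open>0 < k\<close> \<open>0 < \<epsilon>\<close> by (intro eventually_le_if_deriv_neg_above[OF der, of "2 * k * \<epsilon>\<^sup>2"]) auto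
  then show ?thesis
    using eventually_ge_at_top[of 0]
  proof eventually_elim
    case (elim t)
    then have "(norm (x t))\<^sup>2 \<le> c2 / c1 * (D / k + \<epsilon>)\<^sup>2"
      using lower[of t] \<open>0 < c1\<close> by (simp add: B_def field_simps)
    then have "sqrt ((norm (x t))\<^sup>2) \<le> sqrt (c2 / c1 * (D / k + \<epsilon>)\<^sup>2)"
      by (rule real_sqrt_le_mono)
    also have "\<dots> = sqrt (c2 / c1) * (D / k + \<epsilon>)"
      using \<open>0 < k\<close> \<open>0 \<le> D\<close> \<open>0 < \<epsilon>\<close> by (simp only: real_sqrt_mult real_sqrt_abs) simp
    also have "\<dots> = sqrt (c2 / c1) * D / k + e"
      using \<open>0 < c1\<close> \<open>0 < c2\<close> by (simp add: \<epsilon>_def field_simps)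
    finally show ?case by simp
  qed
qed

lemma mechanical_ultimate_bound:
  fixes M C K Mdot :: "real \<Rightarrow> real^'n^'n" and s sdot d :: "real \<Rightarrow> real^'n"
  assumes M_sym: "\<And>t. t \<ge> 0 \<Longrightarrow> symmetric_mat (M t)"
    and M_deriv: "\<And>t. t \<ge> 0 \<Longrightarrow> (M has_vector_derivative Mdot t) (at t within {0..})"
    and skew: "\<And>t. t \<ge> 0 \<Longrightarrow> transpose (Mdot t - 2 *\<^sub>R C t) = - (Mdot t - 2 *\<^sub>R C t)"
    and s_deriv: "\<And>t. t \<ge> 0 \<Longrightarrow> (s has_vector_derivative sdot t) (at t within {0..})"
    and dyn: "\<And>t. t \<ge> 0 \<Longrightarrow> M t *v sdot t + (C t + K t) *v s t = d t"
    and M_lower: "\<And>t x. t \<ge> 0 \<Longrightarrow> m1 * (norm x)\<^sup>2 \<le> x \<bullet> (M t *v x)"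
    and M_upper: "\<And>t x. t \<ge> 0 \<Longrightarrow> x \<bullet> (M t *v x) \<le> m2 * (norm x)\<^sup>2"
    and K_lower: "\<And>t x. t \<ge> 0 \<Longrightarrow> k * (norm x)\<^sup>2 \<le> x \<bullet> (K t *v x)"
    and d_bound: "\<And>t. t \<ge> 0 \<Longrightarrow> norm (d t) \<le> D"
    and "0 < m1" "0 < k" "0 \<le> D" "0 < e"
  shows "eventually (\<lambda>t. norm (s t) \<le> sqrt (m2 / m1) * D / k + e) at_top"
proof -
  define V where "V t = s t \<bullet> (M t *v s t)" for t
  define V' where "V' t = s t \<bullet> (M t *v sdot t + Mdot t *v s t) + sdot t \<bullet> (M t *v s t)" for t
  have "(V has_vector_derivative V' t) (at t within {0..})" if "t \<ge> 0" for t
    unfolding V_def[abs_def] V'_def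
    by (intro bounded_bilinear.has_vector_derivative[OF bounded_bilinear_inner]
        bounded_bilinear.has_vector_derivative[OF bounded_bilinear_matrix_vector_mult]
        s_deriv M_deriv that)
  then have der: "(V has_real_derivative V' t) (at t within {0..})" if "t \<ge> 0" for t
    using that by (simp add: has_real_derivative_iff_has_vector_derivative)
  have V'_eq: "V' t = 2 * (s t \<bullet> d t) - 2 * (s t \<bullet> (K t *v s t))" if "t \<ge> 0" for t
  proof -
    have "s t \<bullet> ((Mdot t - 2 *\<^sub>R C t) *v s t) = 0"
      by (rule skew_quadratic_form_eq_0[OF skew[OF that]])
    then have "s t \<bullet> (Mdot t *v s t) = 2 * (s t \<bullet> (C t *v s t))"
      by (simp add: matrix_vector_mult_diff_rdistrib scaleR_matrix_vector_assoc[symmetric] inner_diff_right)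
    moreover have "M t *v sdot t = d t - C t *v s t - K t *v s t"
      using dyn[OF that] by (simp add: algebra_simps)
    moreover have "sdot t \<bullet> (M t *v s t) = s t \<bullet> (M t *v sdot t)"
      using symmetric_mat_inner_swap[OF M_sym[OF that]] by (simp add: inner_commute)
    ultimately show ?thesis by (simp add: V'_def inner_add_right inner_diff_right)
  qed
  have s_d: "s t \<bullet> d t \<le> D * norm (s t)" if "t \<ge> 0" for t
    using norm_cauchy_schwarz[of "s t" "d t"] mult_left_mono[OF d_bound[OF that] norm_ge_zero[of "s t"]]
    by (simp add: mult.commute)
  have dissipation: "V' t \<le> 2 * D * norm (s t) - 2 * k * (norm (s t))\<^sup>2" if "t > 0" for t
    using V'_eq[of t] s_d[of t] K_lower[of t "s t"] that by simp
  have "m1 \<le> m2"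
    by (rule le_if_quadratic_form_between[OF M_lower[of 0] M_upper[of 0]]) simp_all
  then show ?thesis
    using \<open>0 < m1\<close> assms(11-13) M_lower M_upper
    by (intro lyapunov_ultimate_bound[OF der _ _ dissipation]) (simp_all add: V_def)
qed

lemma first_order_ultimate_bound:
  fixes x xdot w :: "real \<Rightarrow> 'a::real_inner"
  assumes x_deriv: "\<And>t. t \<ge> 0 \<Longrightarrow> (x has_vector_derivative xdot t) (at t within {0..})"
    and dyn: "\<And>t. t \<ge> 0 \<Longrightarrow> xdot t = - (lam *\<^sub>R x t) - w t"
    and w_bound: "\<And>t. t \<ge> 0 \<Longrightarrow> norm (w t) \<le> W"
    and "0 < lam" "0 \<le> W" "0 < e"
  shows "eventually (\<lambda>t. norm (x t) \<le> W / lam + e) at_top"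
proof -
  define V where "V t = x t \<bullet> x t" for t
  define V' where "V' t = x t \<bullet> xdot t + xdot t \<bullet> x t" for t
  have "(V has_vector_derivative V' t) (at t within {0..})" if "t \<ge> 0" for t
    unfolding V_def[abs_def] V'_def
    by (intro bounded_bilinear.has_vector_derivative[OF bounded_bilinear_inner] x_deriv that)
  then have der: "(V has_real_derivative V' t) (at t within {0..})" if "t \<ge> 0" for t
    using that by (simp add: has_real_derivative_iff_has_vector_derivative)
  have "V' t \<le> 2 * W * norm (x t) - 2 * lam * (norm (x t))\<^sup>2" if "t > 0" for t
  proof -
    have "V' t = 2 * (x t \<bullet> xdot t)" by (simp add: V'_def inner_commute)
    also have "\<dots> = - 2 * lam * (norm (x t))\<^sup>2 - 2 * (x t \<bullet> w t)"
      using dyn[of t] that by (simp add: inner_diff_right power2_norm_eq_inner)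
    finally have "V' t = - 2 * lam * (norm (x t))\<^sup>2 - 2 * (x t \<bullet> w t)" .
    moreover have "norm (x t) * norm (w t) \<le> norm (x t) * W"
      using w_bound[of t] that by (simp add: mult_left_mono)
    then have "- (x t \<bullet> w t) \<le> W * norm (x t)"
      using norm_cauchy_schwarz[of "- x t" "w t"] by (simp add: mult.commute)
    ultimately show ?thesis by simp
  qed
  then show ?thesis
    using lyapunov_ultimate_bound[OF der, of 1 x 1 W lam e] assms(4-6)
    by (simp add: V_def power2_norm_eq_inner)
qed

section \<open>Limits superior and suprema in the extended reals\<close>

lemma Limsup_le_if_eventually_le_plus:
  assumes "\<And>e. e > 0 \<Longrightarrow> eventually (\<lambda>t. f t \<le> c + e) F"
  shows "Limsup F (\<lambda>t. ereal (f t)) \<le> ereal c"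
  unfolding Limsup_le_iff
proof (intro allI impI)
  fix y assume "ereal c < y"
  show "eventually (\<lambda>t. ereal (f t) < y) F"
  proof (cases y)
    case (real r)
    with \<open>ereal c < y\<close> have "c < r" by simp
    with assms[of "(r - c) / 2"] have "eventually (\<lambda>t. f t \<le> c + (r - c) / 2) F" by simp
    moreover have "c + (r - c) / 2 < r" using \<open>c < r\<close> by (simp add: field_simps)
    ultimately have "eventually (\<lambda>t. f t < r) F"
      by (auto elim: eventually_mono)
    then show ?thesis using real by simp
  qed (use \<open>ereal c < y\<close> in simp_all)
qed

lemma Limsup_norm_stack_le:
  assumes "\<And>e. e > 0 \<Longrightarrow> eventually (\<lambda>t. norm (s t) \<le> bs + e) F"
    and "\<And>e. e > 0 \<Longrightarrow> eventually (\<lambda>t. norm (a t) \<le> ba + e) F"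
  shows "Limsup F (\<lambda>t. ereal (norm (stack (s t) (a t)))) \<le> ereal (bs + ba)"
proof (rule Limsup_le_if_eventually_le_plus)
  fix e :: real assume "e > 0"
  with assms[of "e / 2"] have "eventually (\<lambda>t. norm (s t) + norm (a t) \<le> bs + ba + e) F"
    by (auto elim: eventually_elim2)
  then show "eventually (\<lambda>t. norm (stack (s t) (a t)) \<le> bs + ba + e) F"
    by eventually_elim (rule order_trans[OF norm_stack_le])
qed

lemma SUP_ereal_norm_cases:
  assumes "T \<noteq> {}"
  obtains (infinite) "(SUP t\<in>T. ereal (norm (f t))) = \<infinity>"
  | (finite) W where "0 \<le> W" "(SUP t\<in>T. ereal (norm (f t))) = ereal W" "\<And>t. t \<in> T \<Longrightarrow> norm (f t) \<le> W"
proof -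
  obtain t0 where "t0 \<in> T" using assms by blast
  then have ge: "ereal (norm (f t0)) \<le> (SUP t\<in>T. ereal (norm (f t)))" by (rule SUP_upper)
  show thesis
  proof (cases "(SUP t\<in>T. ereal (norm (f t)))")
    case (real W)
    have bound: "norm (f t) \<le> W" if "t \<in> T" for t
      using SUP_upper[OF that, of "\<lambda>t. ereal (norm (f t))"] real by simp
    have "0 \<le> W" using bound[OF \<open>t0 \<in> T\<close>] norm_ge_zero order_trans by blast
    show thesis by (rule finite[OF \<open>0 \<le> W\<close> real bound])
  qed (use infinite ge in auto)
qed

lemma bounded_imp_SUP_ereal_norm_neq_infty:
  assumes "bounded (f ` T)"
  shows "(SUP t\<in>T. ereal (norm (f t))) \<noteq> \<infinity>"
proof -
  obtain b where "\<And>t. t \<in> T \<Longrightarrow> norm (f t) \<le> b"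
    using assms unfolding bounded_iff by blast
  then have "(SUP t\<in>T. ereal (norm (f t))) \<le> ereal b" by (simp add: SUP_least)
  then show ?thesis by auto
qed

lemma le_affine_SUP_ereal_norm:
  assumes "T \<noteq> {}" "0 < c" "0 < p"
    and bound: "\<And>W. 0 \<le> W \<Longrightarrow> (\<And>t. t \<in> T \<Longrightarrow> norm (w t) \<le> W) \<Longrightarrow> L \<le> ereal ((D + p * W) / c)"
  shows "L \<le> (ereal D + ereal p * (SUP t\<in>T. ereal (norm (w t)))) / ereal c"
  using \<open>T \<noteq> {}\<close>
proof (cases rule: SUP_ereal_norm_cases[where f = w])
  case (finite W)
  then show ?thesis using bound[of W] \<open>0 < c\<close> by simp
qed (use \<open>0 < c\<close> \<open>0 < p\<close> in simp)

lemma ultimate_bound_le: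
  fixes \<mu> m p k lam D W :: real
  assumes "0 < \<mu>" "\<mu> \<le> m" "\<mu> \<le> p" "0 < k" "0 < lam" "0 \<le> D" "0 \<le> W"
  shows "sqrt (m / \<mu>) * D / k + W / lam \<le> (D + p * W) / (min lam (k / m) * \<mu>)"
proof -
  define \<rho> where "\<rho> = min lam (k / m)"
  have "0 < \<rho>" using assms by (simp add: \<rho>_def)
  have "1 \<le> m / \<mu>" using assms by simp
  then have "m / \<mu> * 1 \<le> m / \<mu> * (m / \<mu>)" by (intro mult_left_mono) auto
  then have "sqrt (m / \<mu>) \<le> sqrt ((m / \<mu>)\<^sup>2)" by (simp add: power2_eq_square)
  then have "sqrt (m / \<mu>) \<le> m / \<mu>" using \<open>1 \<le> m / \<mu>\<close> by simp
  then have "sqrt (m / \<mu>) * D / k \<le> m / \<mu> * D / k"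
    using assms by (intro divide_right_mono mult_right_mono) auto
  also have "\<dots> = D / (k / m * \<mu>)"
    using assms by (simp add: field_simps)
  also have "\<dots> \<le> D / (\<rho> * \<mu>)"
    using assms \<open>0 < \<rho>\<close> by (intro divide_left_mono mult_right_mono) (auto simp: \<rho>_def)
  finally have s: "sqrt (m / \<mu>) * D / k \<le> D / (\<rho> * \<mu>)" .
  have "\<rho> * \<mu> \<le> lam * p"
    using assms \<open>0 < \<rho>\<close> by (intro mult_mono) (auto simp: \<rho>_def)
  then have "W * (\<rho> * \<mu>) \<le> W * (lam * p)"
    using \<open>0 \<le> W\<close> by (rule mult_left_mono)
  then have "W / lam \<le> p * W / (\<rho> * \<mu>)"
    using assms \<open>0 < \<rho>\<close> by (simp add: field_simps)
  with s show ?thesis by (simp add: \<rho>_def add_divide_distrib)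
qed

theorem corollary2:
  fixes M C K Mdot :: "real \<Rightarrow> real^'n^'n"
    and P Q Pinv Pinvdot :: "real \<Rightarrow> real^'h^'h"
    and R :: "real \<Rightarrow> real^'n^'n"
    and \<phi> :: "real \<Rightarrow> real^'h^'n"
    and s sdot d \<epsilon> :: "real \<Rightarrow> real^'n"
    and atil atdot a adot :: "real \<Rightarrow> real^'h"
    and lam :: real
  defines "T \<equiv> {0::real..}"
  assumes M_sym: "\<And>t. t \<in> T \<Longrightarrow> symmetric_mat (M t)"
    and M_pd: "unif_pos_def T M" and M_bdd: "bounded (M ` T)"
    and M_deriv: "\<And>t. t \<in> T \<Longrightarrow> (M has_vector_derivative Mdot t) (at t within T)"
    and skew: "\<And>t. t \<in> T \<Longrightarrow> transpose (Mdot t - 2 *\<^sub>R C t) = - (Mdot t - 2 *\<^sub>R C t)"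
    and K_pd: "unif_pos_def T K" and K_bdd: "bounded (K ` T)"
    and Q_pd: "unif_pos_def T Q"
    and R_pd: "\<And>t. t \<in> T \<Longrightarrow> pos_def (R t)"
    and lam_pos: "lam > 0"
    and a_deriv: "\<And>t. t \<in> T \<Longrightarrow> (a has_vector_derivative adot t) (at t within T)"
    and d_bdd: "bounded (d ` T)" and eps_bdd: "bounded (\<epsilon> ` T)"
    and P_inv: "\<And>t. t \<in> T \<Longrightarrow> invertible (P t) \<and> Pinv t = matrix_inv (P t)"
    and Pinv_pd: "unif_pos_def T Pinv" and Pinv_bdd: "bounded (Pinv ` T)"
    and s_deriv: "\<And>t. t \<in> T \<Longrightarrow> (s has_vector_derivative sdot t) (at t within T)"
    and atil_deriv: "\<And>t. t \<in> T \<Longrightarrow> (atil has_vector_derivative atdot t) (at t within T)"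
    and Pinv_deriv: "\<And>t. t \<in> T \<Longrightarrow> (Pinv has_vector_derivative Pinvdot t) (at t within T)"
    and eq1: "\<And>t. t \<in> T \<Longrightarrow>
       M t *v sdot t + (C t + K t) *v s t + \<phi> t *v atil t = d t"
    and eq2: "\<And>t. t \<in> T \<Longrightarrow>
       Pinv t *v atdot t - transpose (\<phi> t) *v s t
         + (transpose (\<phi> t) ** matrix_inv (R t) ** \<phi> t + lam *\<^sub>R Pinv t) *v atil t
       = transpose (\<phi> t) *v (matrix_inv (R t) *v \<epsilon> t) - lam *\<^sub>R (Pinv t *v a t) - Pinv t *v adot t"
    and eq3: "\<And>t. t \<in> T \<Longrightarrow>
       Pinvdot t = Pinv t ** ((2 * lam) *\<^sub>R P t - Q t + P t ** transpose (\<phi> t) ** matrix_inv (R t) ** \<phi> t ** P t) ** Pinv t"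
    and phi_zero: "\<And>t. t \<in> T \<Longrightarrow> \<phi> t = 0"
  shows "Limsup at_top (\<lambda>t. ereal (norm (stack (s t) (atil t))))
    \<le> ((SUP t\<in>T. ereal (norm (d t)))
         + ereal (lam_max_T T Pinv) * (SUP t\<in>T. ereal (norm (lam *\<^sub>R a t + adot t))))
      / ereal (min lam (lam_min_T T K / lam_max_T T M) * lam_min_T T (\<lambda>t. blockdiag (M t) (Pinv t)))"
proof -
  have T: "T \<noteq> {}" "0 \<in> T" by (simp_all add: T_def)
  define \<mu> where "\<mu> = lam_min_T T (\<lambda>t. blockdiag (M t) (Pinv t))"
  define kmin where "kmin = lam_min_T T K"
  define mmax where "mmax = lam_max_T T M"
  define pmax where "pmax = lam_max_T T Pinv"
  define \<rho> where "\<rho> = min lam (kmin / mmax)"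
  define w where "w t = lam *\<^sub>R a t + adot t" for t
  note \<mu> = lam_min_T_blockdiag[OF M_pd Pinv_pd T(1), folded \<mu>_def]
  note kmin = unif_pos_def_lam_min_T[OF K_pd T(1), folded kmin_def]
  note M_upper = bounded_lam_max_T[OF M_sym M_bdd, folded mmax_def]
  note Pinv_sym = unif_pos_def_symmetric[OF Pinv_pd]
  have "\<mu> \<le> mmax"
    unfolding mmax_def by (rule le_lam_max_T_if_quadratic_form_ge[OF \<mu>(2) M_sym M_bdd T(2)])
  have "\<mu> \<le> pmax"
    unfolding pmax_def by (rule le_lam_max_T_if_quadratic_form_ge[OF \<mu>(3) Pinv_sym Pinv_bdd T(2)])
  have "0 < \<rho>"
    using \<mu>(1) \<open>\<mu> \<le> mmax\<close> kmin(1) lam_pos by (simp add: \<rho>_def)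
  have atil_dyn: "atdot t = - (lam *\<^sub>R atil t) - w t" if "t \<in> T" for t
  proof -
    have "Pinv t *v (atdot t + lam *\<^sub>R atil t + w t) = 0"
      using eq2[OF that] phi_zero[OF that]
      by (simp add: w_def transpose_mat[of 0, unfolded mat_0]
          scaleR_matrix_vector_assoc[symmetric] eq_neg_iff_add_eq_0 algebra_simps)
    then have "atdot t + lam *\<^sub>R atil t + w t = 0"
      using \<mu>(3)[OF that, of "atdot t + lam *\<^sub>R atil t + w t"] \<mu>(1) by (simp add: mult_le_0_iff)
    then show ?thesis by (simp add: eq_neg_iff_add_eq_0 algebra_simps)
  qed
  obtain D where "0 \<le> D" and D: "(SUP t\<in>T. ereal (norm (d t))) = ereal D"
    and d_bound: "\<And>t. t \<in> T \<Longrightarrow> norm (d t) \<le> D"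
    using SUP_ereal_norm_cases[OF T(1), of d] bounded_imp_SUP_ereal_norm_neq_infty[OF d_bdd] by blast
  have "Limsup at_top (\<lambda>t. ereal (norm (stack (s t) (atil t))))
      \<le> (ereal D + ereal pmax * (SUP t\<in>T. ereal (norm (w t)))) / ereal (\<rho> * \<mu>)"
  proof (rule le_affine_SUP_ereal_norm[OF T(1)])
    fix W assume "0 \<le> W" and w_bound: "\<And>t. t \<in> T \<Longrightarrow> norm (w t) \<le> W"
    have "Limsup at_top (\<lambda>t. ereal (norm (stack (s t) (atil t))))
        \<le> ereal (sqrt (mmax / \<mu>) * D / kmin + W / lam)"
    proof (rule Limsup_norm_stack_le)
      show "eventually (\<lambda>t. norm (s t) \<le> sqrt (mmax / \<mu>) * D / kmin + e) at_top" if "e > 0" for e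
        using that M_sym M_deriv skew s_deriv eq1 phi_zero \<mu>(1,2) M_upper kmin d_bound \<open>0 \<le> D\<close>
        by (intro mechanical_ultimate_bound[of M Mdot C s sdot K d \<mu> mmax kmin D]) (simp_all add: T_def)
      show "eventually (\<lambda>t. norm (atil t) \<le> W / lam + e) at_top" if "e > 0" for e
        using that atil_deriv atil_dyn w_bound lam_pos \<open>0 \<le> W\<close>
        by (intro first_order_ultimate_bound) (simp_all add: T_def)
    qed
    also have "\<dots> \<le> ereal ((D + pmax * W) / (\<rho> * \<mu>))"
      using ultimate_bound_le[OF \<mu>(1) \<open>\<mu> \<le> mmax\<close> \<open>\<mu> \<le> pmax\<close> kmin(1) lam_pos \<open>0 \<le> D\<close> \<open>0 \<le> W\<close>]
      by (simp add: \<rho>_def)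
    finally show "Limsup at_top (\<lambda>t. ereal (norm (stack (s t) (atil t)))) \<le> ereal ((D + pmax * W) / (\<rho> * \<mu>))" .
  qed (use \<open>0 < \<rho>\<close> \<mu>(1) \<open>\<mu> \<le> pmax\<close> in simp_all)
  then show ?thesis
    unfolding w_def D[symmetric] \<rho>_def kmin_def mmax_def pmax_def \<mu>_def .
qed

end
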